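(* Let $\lambda\in(0,r^\alpha)$ and consider the $\lambda$-NRW on the augmented tree with horizontal conductances $c(\mathbf x,\mathbf y)=r^{\alpha|\mathbf x|}\lambda^{-|\mathbf x|}$. Then for any two closed subsets $\Phi,\Psi\subset K$, the limit $\lim_{n\to\infty}R_n^{(\lambda)}(\Phi,\Psi)$ exists and is independent of the choice of the $\kappa$-sequence.
   Context: Let $\{S_i\}_{i=1}^N$ ($N\ge2$) be contractive similitudes of $\mathbb R^d$ with ratios $r_i\in(0,1)$ satisfying the open set condition; $K$ the self-similar set, $\alpha$ its Hausdorff dimension ($\sum_ir_i^\alpha=1$), $r=\min_ir_i$. $\Sigma^*$ finite words over $\{1,\dots,N\}$ with empty word $\vartheta$, $S_{\mathbf x}=S_{i_1}\circ\cdots\circ S_{i_k}$, $r_{\mathbf x}=r_{i_1}\cdots r_{i_k}$. $\mathcal J_0=\{\vartheta\}$, $\mathcal J_n=\{i_1\cdots i_k: r_{i_1\cdots i_k}\le r^n<r_{i_1\cdots i_{k-1}}\}$, $X=\bigcup_n\mathcal J_n$, $X_n=\bigcup_{k=0}^n\mathcal J_k$, $|\mathbf x|=n$ on $\mathcal J_n$, parent $\mathbf x^-$ = prefix of $\mathbf x$ in $\mathcal J_{n-1}$. Edges: vertical $\{\mathbf x,\mathbf x^-\}$, horizontal $\{\mathbf x,\mathbf y\}$ for $\mathbf x\ne\mathbf y\in\mathcal J_n$ with $\inf_{\xi,\eta\in K}|S_{\mathbf x}(\xi)-S_{\mathbf y}(\eta)|\le\gamma r^n$ ($\gamma>0$ fixed).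 The $\lambda$-NRW has symmetric conductances $c(\mathbf x,\mathbf x^-)=r_{\mathbf x}^\alpha\lambda^{-|\mathbf x|}$, $c(\mathbf x,\mathbf y)=r^{\alpha|\mathbf x|}\lambda^{-|\mathbf x|}$ on horizontal edges, zero off edges; $X_n$ carries the restricted conductances and energy $\mathcal E_{X_n}[f]=\frac12\sum_{\mathbf x,\mathbf y\in X_n}c(\mathbf x,\mathbf y)(f(\mathbf x)-f(\mathbf y))^2$. Effective resistance: for disjoint nonempty $E,F\subset X_n$, $R_{X_n}(E,F)=(\min\{\mathcal E_{X_n}[f]: f=1$ on $E$, $f=0$ on $F\})^{-1}$, and $R_{X_n}(E,F)=0$ if $E\cap F\ne\emptyset$. A geodesic ray is $(\mathbf x_n)_{n\ge0}$, $\mathbf x_n\in\mathcal J_n$, each a prefix of the next; it converges to $\xi\in K$ if $\xi\in S_{\mathbf x_n}(K)$ for all $n$. A $\kappa$-sequence is a family of maps $\kappa_n:K\to\mathcal J_n$ such that for each $\xi\in K$, $(\kappa_n(\xi))_n$ is a geodesic ray converging to $\xi$. The level-$n$ resistance is $R^{(\lambda)}_n(\Phi,\Psi)=R_{X_n}(\kappa_n(\Phi),\kappa_n(\Psi))$. *)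

theory Defs
  imports "HOL-Analysis.Analysis" "HOL-Library.Sublist"
begin

text \<open>Words over the alphabet {0..<N} (the paper's {1..N}) are lists of naturals.
  The IFS is given by maps S i and ratios rr i for i < N.\<close>

definition similitude :: "real \<Rightarrow> ('a::euclidean_space \<Rightarrow> 'a) \<Rightarrow> bool" where
  "similitude c f \<longleftrightarrow> (\<forall>x y. dist (f x) (f y) = c * dist x y)"

definition open_set_condition :: "nat \<Rightarrow> (nat \<Rightarrow> 'a::euclidean_space \<Rightarrow> 'a) \<Rightarrow> bool" where
  "open_set_condition N S \<longleftrightarrow>
     (\<exists>U. open U \<and> U \<noteq> {} \<and> (\<forall>i<N. S i ` U \<subseteq> U) \<and>
          (\<forall>i<N. \<forall>j<N. i \<noteq> j \<longrightarrow> S i ` U \<inter> S j ` U = {}))"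

definition word_ratio :: "(nat \<Rightarrow> real) \<Rightarrow> nat list \<Rightarrow> real" where
  "word_ratio rr w = prod_list (map rr w)"

definition word_map :: "(nat \<Rightarrow> 'a \<Rightarrow> 'a) \<Rightarrow> nat list \<Rightarrow> 'a \<Rightarrow> 'a" where
  "word_map S w = foldr (\<lambda>i g. S i \<circ> g) w id"

definition rmin :: "nat \<Rightarrow> (nat \<Rightarrow> real) \<Rightarrow> real" where
  "rmin N rr = Min (rr ` {..<N})"

definition Jn :: "nat \<Rightarrow> (nat \<Rightarrow> real) \<Rightarrow> nat \<Rightarrow> nat list set" where
  "Jn N rr n = (if n = 0 then {[]} else
     {w. set w \<subseteq> {..<N} \<and> w \<noteq> [] \<and> word_ratio rr w \<le> rmin N rr ^ n \<and>
         rmin N rr ^ n < word_ratio rr (butlast w)})"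

definition Xn :: "nat \<Rightarrow> (nat \<Rightarrow> real) \<Rightarrow> nat \<Rightarrow> nat list set" where
  "Xn N rr n = (\<Union>k\<le>n. Jn N rr k)"

definition in_tree :: "nat \<Rightarrow> (nat \<Rightarrow> real) \<Rightarrow> nat list \<Rightarrow> bool" where
  "in_tree N rr w \<longleftrightarrow> (\<exists>n. w \<in> Jn N rr n)"

text \<open>The level |w| (the J_n are pairwise disjoint, so this is the unique n with w in J_n).\<close>
definition level :: "nat \<Rightarrow> (nat \<Rightarrow> real) \<Rightarrow> nat list \<Rightarrow> nat" where
  "level N rr w = (LEAST n. w \<in> Jn N rr n)"

definition vert_edge :: "nat \<Rightarrow> (nat \<Rightarrow> real) \<Rightarrow> nat list \<Rightarrow> nat list \<Rightarrow> bool" where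
  "vert_edge N rr x y \<longleftrightarrow> in_tree N rr x \<and> 1 \<le> level N rr x \<and>
     y \<in> Jn N rr (level N rr x - 1) \<and> prefix y x"

definition horiz_edge :: "nat \<Rightarrow> (nat \<Rightarrow> real) \<Rightarrow> (nat \<Rightarrow> 'a::euclidean_space \<Rightarrow> 'a) \<Rightarrow> 'a set
     \<Rightarrow> real \<Rightarrow> nat list \<Rightarrow> nat list \<Rightarrow> bool" where
  "horiz_edge N rr S K \<gamma> x y \<longleftrightarrow> x \<noteq> y \<and> in_tree N rr x \<and> y \<in> Jn N rr (level N rr x) \<and>
     Inf {dist (word_map S x \<xi>) (word_map S y \<eta>) | \<xi> \<eta>. \<xi> \<in> K \<and> \<eta> \<in> K}
       \<le> \<gamma> * rmin N rr ^ level N rr x"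

definition cond :: "nat \<Rightarrow> (nat \<Rightarrow> real) \<Rightarrow> (nat \<Rightarrow> 'a::euclidean_space \<Rightarrow> 'a) \<Rightarrow> 'a set
     \<Rightarrow> real \<Rightarrow> real \<Rightarrow> real \<Rightarrow> nat list \<Rightarrow> nat list \<Rightarrow> real" where
  "cond N rr S K \<alpha> \<gamma> lam x y =
     (if vert_edge N rr x y then word_ratio rr x powr \<alpha> / lam ^ level N rr x
      else if vert_edge N rr y x then word_ratio rr y powr \<alpha> / lam ^ level N rr y
      else if horiz_edge N rr S K \<gamma> x y then
        (rmin N rr powr \<alpha>) ^ level N rr x / lam ^ level N rr x
      else 0)"

definition energy :: "nat \<Rightarrow> (nat \<Rightarrow> real) \<Rightarrow> (nat \<Rightarrow> 'a::euclidean_space \<Rightarrow> 'a) \<Rightarrow> 'a set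
     \<Rightarrow> real \<Rightarrow> real \<Rightarrow> real \<Rightarrow> nat \<Rightarrow> (nat list \<Rightarrow> real) \<Rightarrow> real" where
  "energy N rr S K \<alpha> \<gamma> lam n f =
     1/2 * (\<Sum>x\<in>Xn N rr n. \<Sum>y\<in>Xn N rr n. cond N rr S K \<alpha> \<gamma> lam x y * (f x - f y)^2)"

definition eff_res :: "nat \<Rightarrow> (nat \<Rightarrow> real) \<Rightarrow> (nat \<Rightarrow> 'a::euclidean_space \<Rightarrow> 'a) \<Rightarrow> 'a set
     \<Rightarrow> real \<Rightarrow> real \<Rightarrow> real \<Rightarrow> nat \<Rightarrow> nat list set \<Rightarrow> nat list set \<Rightarrow> real" where
  "eff_res N rr S K \<alpha> \<gamma> lam n E F =
     (if E \<inter> F \<noteq> {} then 0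
      else inverse (Inf {energy N rr S K \<alpha> \<gamma> lam n f | f.
                          (\<forall>x\<in>E. f x = 1) \<and> (\<forall>x\<in>F. f x = 0)}))"

text \<open>kappa-sequences: for each xi in K, (kappa n xi)_n is a geodesic ray converging to xi.\<close>
definition kappa_seq :: "nat \<Rightarrow> (nat \<Rightarrow> real) \<Rightarrow> (nat \<Rightarrow> 'a \<Rightarrow> 'a) \<Rightarrow> 'a set
     \<Rightarrow> (nat \<Rightarrow> 'a \<Rightarrow> nat list) \<Rightarrow> bool" where
  "kappa_seq N rr S K \<kappa> \<longleftrightarrow>
     (\<forall>\<xi>\<in>K. \<forall>n. \<kappa> n \<xi> \<in> Jn N rr n \<and> prefix (\<kappa> n \<xi>) (\<kappa> (Suc n) \<xi>) \<and>
               \<xi> \<in> word_map S (\<kappa> n \<xi>) ` K)"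

definition level_res :: "nat \<Rightarrow> (nat \<Rightarrow> real) \<Rightarrow> (nat \<Rightarrow> 'a::euclidean_space \<Rightarrow> 'a) \<Rightarrow> 'a set
     \<Rightarrow> real \<Rightarrow> real \<Rightarrow> real \<Rightarrow> (nat \<Rightarrow> 'a \<Rightarrow> nat list) \<Rightarrow> nat \<Rightarrow> 'a set \<Rightarrow> 'a set \<Rightarrow> real" where
  "level_res N rr S K \<alpha> \<gamma> lam \<kappa> n \<Phi> \<Psi> =
     eff_res N rr S K \<alpha> \<gamma> lam n (\<kappa> n ` \<Phi>) (\<kappa> n ` \<Psi>)"

end

theory Submission
  imports Defs
begin

text \<open>
  By Dirichlet's principle \<open>R\<^sub>n\<close> is the inverse capacity between \<open>\<kappa>\<^sub>n(\<Phi>)\<close> and \<open>\<kappa>\<^sub>n(\<Psi>)\<close>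
  in the finite network \<open>X\<^sub>n\<close>. Both estimates below test the equilibrium potential \<open>f\<close> of one
  network against a potential \<open>g\<close> that is only \<open>d\<close>-close to the boundary values, giving
  \<open>(1 - 2d) \<surd>C \<le> \<surd>E(g)\<close>. A potential of \<open>X\<^sub>n\<^sub>+\<^sub>1\<close> changes little along the vertical edges
  between \<open>\<kappa>\<^sub>n\<close> and \<open>\<kappa>\<^sub>n\<^sub>+\<^sub>1\<close>, whose conductances are of order \<open>\<rho>\<^sup>-\<^sup>n\<close> with
  \<open>\<rho> = \<lambda>/r\<^sup>\<alpha> < 1\<close>, so \<open>R\<^sub>n\<^sub>+\<^sub>1 \<le> R\<^sub>n + O(\<rho>\<^sup>n)\<close> and \<open>R\<^sub>n\<close> converges. Two
  \<open>\<kappa>\<close>-sequences pick level-\<open>n\<close> cells sharing a point, hence joined by horizontal edges of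
  conductance \<open>\<rho>\<^sup>-\<^sup>n\<close>, so the square roots of their resistances differ by \<open>O(\<rho>\<^sup>n\<^sup>/\<^sup>2)\<close>
  and the limits agree. All this needs \<open>\<kappa>\<^sub>n(\<Phi>)\<close> and \<open>\<kappa>\<^sub>n(\<Psi>)\<close> disjoint, which holds
  eventually when \<open>\<Phi> \<inter> \<Psi> = {}\<close> because level-\<open>n\<close> cells have diameter at most
  \<open>r\<^sup>n diam K\<close>; if \<open>\<Phi>\<close> and \<open>\<Psi>\<close> meet, every \<open>R\<^sub>n\<close> is \<open>0\<close>.
\<close>

section \<open>Elementary estimates\<close>

lemma linear_coeff_zero_if_quadratic_nonneg:
  fixes a b :: real
  assumes "0 \<le> b" and "\<And>t. 0 \<le> a * t + b * t^2"
  shows "a = 0"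
proof (rule ccontr)
  assume "a \<noteq> 0"
  define t where "t = - a / (b + 1)"
  have e: "(b + 1) * t = - a" using assms(1) unfolding t_def by simp
  have "(b + 1)^2 * (a * t + b * t^2) = a * (b + 1) * ((b + 1) * t) + b * ((b + 1) * t)^2"
    by (simp add: power2_eq_square algebra_simps)
  also have "\<dots> = - (a^2)" unfolding e by (simp add: power2_eq_square algebra_simps)
  finally have "(b + 1)^2 * (a * t + b * t^2) = - (a^2)" .
  then have "(b + 1)^2 * (a * t + b * t^2) < 0" using \<open>a \<noteq> 0\<close> by simp
  moreover have "0 \<le> (b + 1)^2 * (a * t + b * t^2)" using assms(2)[of t] by simp
  ultimately show False by simp
qed

lemma le_mult_add_of_sqrt_le:
  fixes C e P W :: real
  assumes "0 \<le> C" "0 \<le> e" "0 \<le> P" "0 \<le> W"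
    and le: "sqrt C \<le> sqrt P + 2 * sqrt (e * W) * sqrt C"
  shows "C \<le> (1 + 4 * e * C) * (P + W)"
proof -
  define k where "k = 2 * sqrt e * sqrt C"
  have "sqrt C \<le> sqrt P + k * sqrt W"
    using le unfolding k_def by (simp add: real_sqrt_mult algebra_simps)
  then have "(sqrt C)^2 \<le> (sqrt P + k * sqrt W)^2" by (rule power_mono) (simp add: assms(1))
  also have "\<dots> \<le> (1 + k^2) * ((sqrt P)^2 + (sqrt W)^2)"
    using zero_le_power2[of "k * sqrt P - sqrt W"] by (simp add: power2_eq_square algebra_simps)
  finally show ?thesis unfolding k_def using assms(1-4) by (simp add: power_mult_distrib)
qed

lemma div_le_sqrt_of_sqrt_le:
  fixes C k P :: real
  assumes "0 \<le> C" "0 \<le> k" "0 \<le> P" and le: "sqrt C \<le> sqrt P + 2 * (k * sqrt P) * sqrt C"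
  shows "sqrt C / (1 + 2 * k * sqrt C) \<le> sqrt P"
proof -
  have "sqrt C \<le> sqrt P * (1 + 2 * k * sqrt C)" using le by (simp add: algebra_simps)
  moreover have "0 < 1 + 2 * k * sqrt C" using assms(1,2) by (simp add: add_pos_nonneg)
  ultimately show ?thesis by (simp add: divide_le_eq)
qed

text \<open>Subtracting the partial sums of \<open>e\<close> turns \<open>f\<close> into a decreasing sequence bounded below.\<close>
lemma convergent_if_almost_decreasing:
  fixes f e :: "nat \<Rightarrow> real"
  assumes step: "\<And>m. m \<ge> m0 \<Longrightarrow> f (Suc m) \<le> f m + e m" and nonneg: "\<And>m. m \<ge> m0 \<Longrightarrow> 0 \<le> f m"
    and "summable e" and e_nonneg: "\<And>m. 0 \<le> e m"
  shows "convergent f"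
proof -
  define e' where "e' k = e (k + m0)" for k
  have "summable e'" unfolding e'_def using \<open>summable e\<close> by (rule summable_ignore_initial_segment)
  define T where "T n = f (n + m0) - (\<Sum>k<n. e' k)" for n
  have "decseq T"
  proof (rule decseq_SucI)
    fix n
    show "T (Suc n) \<le> T n" using step[of "n + m0"] unfolding T_def e'_def by (simp add: add.commute)
  qed
  moreover have "- suminf e' \<le> T n" for n
    using sum_le_suminf[OF \<open>summable e'\<close>, of "{..<n}"] e_nonneg nonneg[of "n + m0"]
    unfolding T_def e'_def by simp
  ultimately obtain L where "T \<longlonglongrightarrow> L" using decseq_convergent by blast
  then have "(\<lambda>n. T n + (\<Sum>k<n. e' k)) \<longlonglongrightarrow> L + suminf e'"
    by (intro tendsto_add summable_LIMSEQ[OF \<open>summable e'\<close>])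
  then have "(\<lambda>n. f (n + m0)) \<longlonglongrightarrow> L + suminf e'" unfolding T_def by simp
  then show ?thesis unfolding convergent_def using LIMSEQ_offset by blast
qed

section \<open>Finite electrical networks\<close>

definition net_energy :: "'b set \<Rightarrow> ('b \<Rightarrow> 'b \<Rightarrow> real) \<Rightarrow> ('b \<Rightarrow> real) \<Rightarrow> real" where
  "net_energy V c f = 1/2 * (\<Sum>x\<in>V. \<Sum>y\<in>V. c x y * (f x - f y)^2)"

definition net_form :: "'b set \<Rightarrow> ('b \<Rightarrow> 'b \<Rightarrow> real) \<Rightarrow> ('b \<Rightarrow> real) \<Rightarrow> ('b \<Rightarrow> real) \<Rightarrow> real" where
  "net_form V c f h = 1/2 * (\<Sum>x\<in>V. \<Sum>y\<in>V. c x y * (f x - f y) * (h x - h y))"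

definition net_flux :: "'b set \<Rightarrow> ('b \<Rightarrow> 'b \<Rightarrow> real) \<Rightarrow> ('b \<Rightarrow> real) \<Rightarrow> 'b \<Rightarrow> real" where
  "net_flux V c f x = (\<Sum>y\<in>V. c x y * (f x - f y))"

definition admissible :: "'b set \<Rightarrow> 'b set \<Rightarrow> ('b \<Rightarrow> real) \<Rightarrow> bool" where
  "admissible A B f \<longleftrightarrow> (\<forall>x\<in>A. f x = 1) \<and> (\<forall>x\<in>B. f x = 0)"

definition net_capacity :: "'b set \<Rightarrow> ('b \<Rightarrow> 'b \<Rightarrow> real) \<Rightarrow> 'b set \<Rightarrow> 'b set \<Rightarrow> real" where
  "net_capacity V c A B = Inf {net_energy V c f | f. admissible A B f}"

lemma continuous_on_apply [continuous_intros]: "continuous_on S (\<lambda>f::'b \<Rightarrow> real. f x)"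
  by (rule continuous_on_subset[OF continuous_on_product_coordinates]) simp

lemma admissible_ex: "A \<inter> B = {} \<Longrightarrow> admissible A B (\<lambda>x. if x \<in> A then 1 else 0)"
  unfolding admissible_def by auto

lemma admissible_image_approx:
  assumes g: "admissible (v ` \<Phi>) (v ` \<Psi>) g"
    and close: "\<And>\<xi>. \<xi> \<in> \<Phi> \<union> \<Psi> \<Longrightarrow> (g (u \<xi>) - g (v \<xi>))^2 \<le> D"
  shows "x \<in> u ` \<Phi> \<Longrightarrow> \<bar>g x - 1\<bar> \<le> sqrt D" and "x \<in> u ` \<Psi> \<Longrightarrow> \<bar>g x\<bar> \<le> sqrt D"
  using g close[THEN real_sqrt_le_mono] unfolding admissible_def by force+

locale network =
  fixes V :: "'b set" and c :: "'b \<Rightarrow> 'b \<Rightarrow> real"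
  assumes finite_V: "finite V" and c_sym: "\<And>x y. c x y = c y x"
    and c_nonneg: "\<And>x y. 0 \<le> c x y"
begin

lemma energy_term_nonneg: "0 \<le> c x y * (f x - f y)^2"
  by (simp add: c_nonneg)

lemma energy_nonneg: "0 \<le> net_energy V c f"
  unfolding net_energy_def by (intro mult_nonneg_nonneg sum_nonneg energy_term_nonneg) simp

lemma energy_eq_form: "net_energy V c f = net_form V c f f"
  unfolding net_energy_def net_form_def by (simp add: power2_eq_square mult.assoc)

lemma form_eq_sum_flux: "net_form V c f h = (\<Sum>x\<in>V. h x * net_flux V c f x)"
proof -
  have "(\<Sum>x\<in>V. \<Sum>y\<in>V. c x y * (f x - f y) * h y) = (\<Sum>y\<in>V. \<Sum>x\<in>V. c x y * (f x - f y) * h y)"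
    by (rule sum.swap)
  also have "\<dots> = (\<Sum>x\<in>V. \<Sum>y\<in>V. - (c x y * (f x - f y) * h x))"
    by (intro sum.cong refl) (simp add: c_sym algebra_simps)
  finally have "(\<Sum>x\<in>V. \<Sum>y\<in>V. c x y * (f x - f y) * h y) =
      - (\<Sum>x\<in>V. \<Sum>y\<in>V. c x y * (f x - f y) * h x)"
    by (simp add: sum_negf)
  moreover have "(\<Sum>x\<in>V. \<Sum>y\<in>V. c x y * (f x - f y) * (h x - h y)) =
      (\<Sum>x\<in>V. \<Sum>y\<in>V. c x y * (f x - f y) * h x) - (\<Sum>x\<in>V. \<Sum>y\<in>V. c x y * (f x - f y) * h y)"
    by (simp add: sum_subtractf[symmetric] algebra_simps)
  ultimately have "(\<Sum>x\<in>V. \<Sum>y\<in>V. c x y * (f x - f y) * (h x - h y)) =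
      2 * (\<Sum>x\<in>V. \<Sum>y\<in>V. c x y * (f x - f y) * h x)" by simp
  then show ?thesis
    unfolding net_form_def net_flux_def by (simp add: sum_distrib_left algebra_simps)
qed

lemma energy_add_scaled:
  "net_energy V c (\<lambda>x. f x + t * h x) = net_energy V c f + 2 * t * net_form V c f h + t^2 * net_energy V c h"
proof -
  have "c x y * ((f x + t * h x) - (f y + t * h y))^2 =
      c x y * (f x - f y)^2 + 2 * t * (c x y * (f x - f y) * (h x - h y)) + t^2 * (c x y * (h x - h y)^2)"
    for x y by (simp add: power2_eq_square algebra_simps)
  then have "(\<Sum>x\<in>V. \<Sum>y\<in>V. c x y * ((f x + t * h x) - (f y + t * h y))^2) =
      (\<Sum>x\<in>V. \<Sum>y\<in>V. c x y * (f x - f y)^2) + 2 * t * (\<Sum>x\<in>V. \<Sum>y\<in>V. c x y * (f x - f y) * (h x - h y))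
      + t^2 * (\<Sum>x\<in>V. \<Sum>y\<in>V. c x y * (h x - h y)^2)"
    by (simp add: sum.distrib sum_distrib_left)
  then show ?thesis unfolding net_energy_def net_form_def by (simp add: algebra_simps)
qed

lemma form_le_sqrt_energy: "net_form V c f h \<le> sqrt (net_energy V c f) * sqrt (net_energy V c h)"
proof -
  let ?E = "net_energy V c" and ?B = "net_form V c f h"
  have quad: "0 \<le> ?E f + 2 * t * ?B + t^2 * ?E h" for t
    using energy_add_scaled[of f t h] energy_nonneg[of "\<lambda>x. f x + t * h x"] by simp
  have "?B^2 \<le> ?E f * ?E h"
  proof (cases "?E h = 0")
    case True
    have "?B = 0"
    proof (rule ccontr)
      assume "?B \<noteq> 0"
      then have "?E f + 2 * (- (?E f + 1) / (2 * ?B)) * ?B = -1" by (simp add: field_simps)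
      then show False using quad[of "- (?E f + 1) / (2 * ?B)"] True by simp
    qed
    then show ?thesis using True by simp
  next
    case False
    then have pos: "0 < ?E h" using energy_nonneg[of h] by simp
    have "0 \<le> ?E f + 2 * (- ?B / ?E h) * ?B + (- ?B / ?E h)^2 * ?E h" by (rule quad)
    also have "\<dots> = ?E f - ?B^2 / ?E h" using pos by (simp add: field_simps power2_eq_square)
    finally show ?thesis using pos by (simp add: field_simps)
  qed
  then have "\<bar>?B\<bar> \<le> sqrt (?E f * ?E h)" using real_sqrt_le_mono by fastforce
  then show ?thesis by (simp add: real_sqrt_mult)
qed

lemma energy_term_le:
  assumes "x \<in> V" "y \<in> V"
  shows "c x y * (f x - f y)^2 \<le> 2 * net_energy V c f"
proof -
  have "c x y * (f x - f y)^2 \<le> (\<Sum>y\<in>V. c x y * (f x - f y)^2)"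
    using assms(2) finite_V energy_term_nonneg by (intro member_le_sum) auto
  also have "\<dots> \<le> (\<Sum>x\<in>V. \<Sum>y\<in>V. c x y * (f x - f y)^2)"
    using assms(1) finite_V energy_term_nonneg by (intro member_le_sum sum_nonneg) auto
  finally show ?thesis unfolding net_energy_def by simp
qed

lemma energy_add_edge_le:
  assumes "W \<subseteq> V" and "a \<in> W" and "b \<in> V" "b \<notin> W"
  shows "net_energy W c g + c a b * (g a - g b)^2 \<le> net_energy V c g"
proof -
  define F where "F p = c (fst p) (snd p) * (g (fst p) - g (snd p))^2" for p
  have energy_sum: "net_energy U c g = 1/2 * sum F (U \<times> U)" if "finite U" for U
    unfolding net_energy_def F_def using that by (simp add: sum.cartesian_product case_prod_beta)
  have "finite W" using assms(1) finite_V finite_subset by auto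
  have "F (b, a) = F (a, b)" unfolding F_def by (simp add: c_sym power2_commute)
  moreover have "(a, b) \<noteq> (b, a)" using assms by auto
  ultimately have "sum F (W \<times> W) + 2 * F (a, b) = sum F ((W \<times> W) \<union> {(a, b), (b, a)})"
    using \<open>finite W\<close> assms(4) by (subst sum.union_disjoint) auto
  also have "\<dots> \<le> sum F (V \<times> V)"
    using assms finite_V energy_term_nonneg unfolding F_def by (intro sum_mono2) auto
  finally show ?thesis unfolding energy_sum[OF \<open>finite W\<close>] energy_sum[OF finite_V] F_def by simp
qed

end

definition (in network) equilibrium_potential :: "'b set \<Rightarrow> 'b set \<Rightarrow> ('b \<Rightarrow> real) \<Rightarrow> bool" where
  "equilibrium_potential A B f \<longleftrightarrow> admissible A B f \<and> (\<forall>x. 0 \<le> f x \<and> f x \<le> 1) \<and>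
     (\<forall>g. admissible A B g \<longrightarrow> net_energy V c f \<le> net_energy V c g)"

context network
begin

lemma equilibrium_potential_exists:
  assumes "A \<inter> B = {}"
  obtains f where "equilibrium_potential A B f"
proof -
  define R where "R x = (if x \<in> A then {1} else if x \<in> B then {0} else {0..1::real})" for x
  have "compactin (product_topology (\<lambda>_. euclidean) UNIV) (PiE UNIV R)"
    unfolding compactin_PiE R_def by (auto simp: compactin_euclidean_iff)
  then have cpt: "compact (PiE UNIV R)" by (simp add: euclidean_product_topology compactin_euclidean_iff)
  have mem: "g \<in> PiE UNIV R \<longleftrightarrow> (\<forall>x. g x \<in> R x)" for g by (simp add: PiE_UNIV_domain Pi_iff)
  have clip: "(\<lambda>x. max 0 (min 1 (g x))) \<in> PiE UNIV R" if "admissible A B g" for g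
    using that assms unfolding mem R_def admissible_def by auto
  have "PiE UNIV R \<noteq> {}" using clip[OF admissible_ex[OF assms]] by auto
  moreover have "continuous_on (PiE UNIV R) (net_energy V c)"
    unfolding net_energy_def by (intro continuous_intros)
  ultimately obtain f where f: "f \<in> PiE UNIV R" and fmin: "\<forall>g\<in>PiE UNIV R. net_energy V c f \<le> net_energy V c g"
    using continuous_attains_inf[OF cpt] by blast
  have clip_le: "net_energy V c (\<lambda>x. max 0 (min 1 (g x))) \<le> net_energy V c g" for g
    unfolding net_energy_def
  proof (intro mult_left_mono sum_mono mult_left_mono)
    fix x y
    have "\<bar>max 0 (min 1 (g x)) - max 0 (min 1 (g y))\<bar> \<le> \<bar>g x - g y\<bar>" by (simp add: max_def min_def abs_if)
    then show "(max 0 (min 1 (g x)) - max 0 (min 1 (g y)))^2 \<le> (g x - g y)^2"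
      by (simp add: abs_le_square_iff)
  qed (simp_all add: c_nonneg)
  have fR: "f x \<in> R x" for x using f mem by blast
  have "admissible A B f"
    unfolding admissible_def
  proof (intro conjI ballI)
    fix x assume "x \<in> A" then show "f x = 1" using fR[of x] by (simp add: R_def)
  next
    fix x assume "x \<in> B" then show "f x = 0" using fR[of x] assms by (auto simp: R_def split: if_splits)
  qed
  moreover have "0 \<le> f x \<and> f x \<le> 1" for x using fR[of x] by (auto simp: R_def split: if_splits)
  moreover have "net_energy V c f \<le> net_energy V c g" if "admissible A B g" for g
    using fmin clip[OF that] clip_le[of g] by (meson order_trans)
  ultimately have "equilibrium_potential A B f" unfolding equilibrium_potential_def by blast
  then show ?thesis by (rule that)
qed

lemma capacity_eq_energy:
  "equilibrium_potential A B f \<Longrightarrow> net_capacity V c A B = net_energy V c f"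
  unfolding net_capacity_def equilibrium_potential_def by (rule cInf_eq_minimum) auto

lemma capacity_nonneg: "A \<inter> B = {} \<Longrightarrow> 0 \<le> net_capacity V c A B"
  by (metis equilibrium_potential_exists capacity_eq_energy energy_nonneg)

lemma capacity_ge:
  assumes "A \<inter> B = {}" and "\<And>g. admissible A B g \<Longrightarrow> a \<le> net_energy V c g"
  shows "a \<le> net_capacity V c A B"
  unfolding net_capacity_def using admissible_ex[OF assms(1)] assms(2) by (intro cInf_greatest) auto

lemma flux_eq_0_off_boundary:
  assumes f: "equilibrium_potential A B f" and z: "z \<in> V" "z \<notin> A" "z \<notin> B"
  shows "net_flux V c f z = 0"
proof -
  define h where "h x = (if x = z then 1 else 0::real)" for x
  have form: "net_form V c f h = net_flux V c f z"
    unfolding form_eq_sum_flux h_def using z(1) finite_V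
    by (simp add: if_distrib[of "\<lambda>a. a * _"] sum.delta cong: if_cong)
  have "0 \<le> (2 * net_flux V c f z) * t + net_energy V c h * t^2" for t
  proof -
    have "admissible A B (\<lambda>x. f x + t * h x)" using f z unfolding equilibrium_potential_def admissible_def h_def by auto
    then have "net_energy V c f \<le> net_energy V c (\<lambda>x. f x + t * h x)"
      using f unfolding equilibrium_potential_def by blast
    then show ?thesis unfolding energy_add_scaled form by (simp add: algebra_simps)
  qed
  then show ?thesis using linear_coeff_zero_if_quadratic_nonneg[OF energy_nonneg] by fastforce
qed

lemma flux_nonneg_on_source:
  assumes "equilibrium_potential A B f" and "x \<in> A"
  shows "0 \<le> net_flux V c f x"
proof -
  have "0 \<le> c x y * (f x - f y)" for y
    using assms c_nonneg[of x y] by (simp add: equilibrium_potential_def admissible_def)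
  then show ?thesis unfolding net_flux_def by (simp add: sum_nonneg)
qed

lemma flux_nonpos_on_sink:
  assumes "equilibrium_potential A B f" and "x \<in> B"
  shows "net_flux V c f x \<le> 0"
proof -
  have "c x y * (f x - f y) \<le> 0" for y
    using assms c_nonneg[of x y] by (simp add: equilibrium_potential_def admissible_def mult_nonneg_nonpos)
  then show ?thesis unfolding net_flux_def by (simp add: sum_nonpos)
qed

lemma form_equilibrium_eq_boundary_sum:
  assumes "A \<subseteq> V" "B \<subseteq> V" "A \<inter> B = {}" and f: "equilibrium_potential A B f"
  shows "net_form V c f h = (\<Sum>x\<in>A. h x * net_flux V c f x) + (\<Sum>x\<in>B. h x * net_flux V c f x)"
proof -
  let ?t = "\<lambda>x. h x * net_flux V c f x"
  have "finite A" "finite B" using assms(1,2) finite_V by (auto intro: finite_subset)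
  have "(\<Sum>x\<in>V. ?t x) = (\<Sum>x\<in>V - (A \<union> B). ?t x) + (\<Sum>x\<in>A \<union> B. ?t x)"
    using assms finite_V by (intro sum.subset_diff) auto
  also have "(\<Sum>x\<in>V - (A \<union> B). ?t x) = 0"
    using flux_eq_0_off_boundary[OF f] by (intro sum.neutral) auto
  also have "(\<Sum>x\<in>A \<union> B. ?t x) = (\<Sum>x\<in>A. ?t x) + (\<Sum>x\<in>B. ?t x)"
    using \<open>finite A\<close> \<open>finite B\<close> assms(3) by (rule sum.union_disjoint)
  finally show ?thesis unfolding form_eq_sum_flux by simp
qed

lemma flux_sums_eq_capacity:
  assumes "A \<subseteq> V" "B \<subseteq> V" "A \<inter> B = {}" and f: "equilibrium_potential A B f"
  shows "(\<Sum>x\<in>A. net_flux V c f x) = net_capacity V c A B"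
    and "(\<Sum>x\<in>B. net_flux V c f x) = - net_capacity V c A B"
proof -
  note split = form_equilibrium_eq_boundary_sum[OF assms]
  have "net_capacity V c A B = net_form V c f f" using capacity_eq_energy[OF f] energy_eq_form by simp
  also have "\<dots> = (\<Sum>x\<in>A. net_flux V c f x)"
    using f unfolding split by (simp add: equilibrium_potential_def admissible_def)
  finally show sA: "(\<Sum>x\<in>A. net_flux V c f x) = net_capacity V c A B" ..
  have "net_form V c f (\<lambda>_. 1) = 0" unfolding net_form_def by simp
  then show "(\<Sum>x\<in>B. net_flux V c f x) = - net_capacity V c A B" using sA unfolding split by simp
qed

text \<open>By Green's formula \<open>net_form V c f g\<close> is the flux-weighted boundary sum of \<open>g\<close>, hence at least
  \<open>(1 - 2d) C\<close>; Cauchy-Schwarz bounds it by \<open>\<surd>C \<surd>E(g)\<close>.\<close>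
lemma sqrt_capacity_le_approx_admissible:
  assumes "A \<subseteq> V" "B \<subseteq> V" "A \<inter> B = {}" and "0 \<le> d"
    and gA: "\<And>x. x \<in> A \<Longrightarrow> \<bar>g x - 1\<bar> \<le> d" and gB: "\<And>x. x \<in> B \<Longrightarrow> \<bar>g x\<bar> \<le> d"
  shows "sqrt (net_capacity V c A B) \<le> sqrt (net_energy V c g) + 2 * d * sqrt (net_capacity V c A B)"
proof -
  obtain f where f: "equilibrium_potential A B f" using equilibrium_potential_exists[OF assms(3)] .
  let ?C = "net_capacity V c A B" and ?i = "net_flux V c f"
  note sums = flux_sums_eq_capacity[OF assms(1-3) f]
  have "- (d * ?i x) \<le> (g x - 1) * ?i x" if "x \<in> A" for x
    using gA[OF that] mult_right_mono[of "1 - g x" d "?i x"] flux_nonneg_on_source[OF f that]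
    by (simp add: abs_le_iff algebra_simps)
  then have a: "- (d * ?C) \<le> (\<Sum>x\<in>A. (g x - 1) * ?i x)"
    using sums(1) sum_mono[of A "\<lambda>x. - (d * ?i x)"] by (simp add: sum_negf sum_distrib_left[symmetric])
  have "d * ?i x \<le> g x * ?i x" if "x \<in> B" for x
    using gB[OF that] mult_right_mono_neg[of "g x" d "?i x"] flux_nonpos_on_sink[OF f that]
    by (simp add: abs_le_iff)
  then have b: "- (d * ?C) \<le> (\<Sum>x\<in>B. g x * ?i x)"
    using sums(2) sum_mono[of B "\<lambda>x. d * ?i x"] by (simp add: sum_distrib_left[symmetric])
  have "net_form V c f g = ?C + (\<Sum>x\<in>A. (g x - 1) * ?i x) + (\<Sum>x\<in>B. g x * ?i x)"
    unfolding form_equilibrium_eq_boundary_sum[OF assms(1-3) f] sums(1)[symmetric]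
    by (simp add: left_diff_distrib sum_subtractf)
  then have "?C - 2 * d * ?C \<le> sqrt ?C * sqrt (net_energy V c g)"
    using a b form_le_sqrt_energy[of f g] capacity_eq_energy[OF f] by simp
  moreover have "0 \<le> ?C" using capacity_eq_energy[OF f] energy_nonneg by simp
  ultimately have le: "sqrt ?C * sqrt ?C \<le> sqrt ?C * (sqrt (net_energy V c g) + 2 * d * sqrt ?C)"
    by (simp add: algebra_simps)
  show ?thesis
  proof (cases "?C = 0")
    case True
    then show ?thesis using energy_nonneg[of g] by simp
  next
    case False
    then show ?thesis using mult_left_le_imp_le[OF le] \<open>0 \<le> ?C\<close> by simp
  qed
qed

end

section \<open>The augmented tree of a self-similar set\<close>

lemma word_ratio_Nil [simp]: "word_ratio rr [] = 1"
  by (simp add: word_ratio_def)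

lemma word_ratio_Cons [simp]: "word_ratio rr (i # w) = rr i * word_ratio rr w"
  by (simp add: word_ratio_def)

lemma word_ratio_append: "word_ratio rr (u @ w) = word_ratio rr u * word_ratio rr w"
  by (simp add: word_ratio_def)

lemma word_map_Nil [simp]: "word_map S [] = id"
  by (simp add: word_map_def)

lemma word_map_Cons [simp]: "word_map S (i # w) = S i \<circ> word_map S w"
  by (simp add: word_map_def)

locale lambda_nrw =
  fixes N :: nat and rr :: "nat \<Rightarrow> real" and S :: "nat \<Rightarrow> 'a::euclidean_space \<Rightarrow> 'a"
    and K :: "'a set" and \<alpha> \<gamma> lam :: real
  assumes N_ge_2: "2 \<le> N"
    and ratios: "\<forall>i<N. 0 < rr i \<and> rr i < 1 \<and> similitude (rr i) (S i)"
    and moran: "(\<Sum>i<N. rr i powr \<alpha>) = 1"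
    and gamma_pos: "0 < \<gamma>"
    and lam_pos: "0 < lam" and lam_less: "lam < rmin N rr powr \<alpha>"
begin

abbreviation "r \<equiv> rmin N rr"
abbreviation "q \<equiv> r powr \<alpha>"
abbreviation "\<rho> \<equiv> lam / q"
abbreviation "J \<equiv> Jn N rr"
abbreviation "X \<equiv> Xn N rr"
abbreviation "wr \<equiv> word_ratio rr"

text \<open>Averaging \<open>cond\<close> with its transpose leaves \<open>energy\<close> unchanged and spares us proving
  that \<open>cond\<close> is symmetric.\<close>
definition sym_cond :: "nat list \<Rightarrow> nat list \<Rightarrow> real" where
  "sym_cond x y = (cond N rr S K \<alpha> \<gamma> lam x y + cond N rr S K \<alpha> \<gamma> lam y x) / 2"

lemma rmin_in_ratios: "\<exists>i<N. r = rr i"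
proof -
  have "rr ` {..<N} \<noteq> {}" using N_ge_2 by (auto simp: lessThan_empty_iff)
  then have "r \<in> rr ` {..<N}" unfolding rmin_def by (intro Min_in) auto
  then show ?thesis by auto
qed

lemma rmin_pos: "0 < r" and rmin_less_1: "r < 1"
  using rmin_in_ratios ratios by auto

lemma rmin_le: "i < N \<Longrightarrow> r \<le> rr i"
  unfolding rmin_def by (rule Min_le) auto

lemma alpha_pos: "0 < \<alpha>"
proof (rule ccontr)
  assume "\<not> 0 < \<alpha>"
  have "1 \<le> rr i powr \<alpha>" if "i < N" for i
  proof -
    have "ln (rr i) < 0" using ratios that by (simp add: ln_less_zero)
    then have "0 \<le> \<alpha> * ln (rr i)" using \<open>\<not> 0 < \<alpha>\<close> by (simp add: mult_nonpos_nonpos)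
    then show ?thesis using ratios that by (auto simp: powr_def)
  qed
  then have "(\<Sum>i<N. (1::real)) \<le> (\<Sum>i<N. rr i powr \<alpha>)" by (intro sum_mono) auto
  then show False using moran N_ge_2 by simp
qed

lemma q_pos: "0 < q"
  using rmin_pos by simp

lemma rho_pos: "0 < \<rho>" and rho_less_1: "\<rho> < 1"
  using lam_pos lam_less q_pos by auto

lemma word_ratio_pos: "set w \<subseteq> {..<N} \<Longrightarrow> 0 < wr w"
  by (induction w) (use ratios in auto)

lemma dist_word_map:
  "set w \<subseteq> {..<N} \<Longrightarrow> dist (word_map S w a) (word_map S w b) = wr w * dist a b"
proof (induction w)
  case (Cons i w)
  then show ?case using ratios unfolding similitude_def by auto
qed simp

lemma J_0: "J 0 = {[]}"
  by (simp add: Jn_def)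

lemma J_letters: "w \<in> J n \<Longrightarrow> set w \<subseteq> {..<N}"
  by (cases "n = 0") (auto simp: Jn_def)

lemma J_ratio_le: "w \<in> J n \<Longrightarrow> wr w \<le> r ^ n"
  by (cases "n = 0") (auto simp: Jn_def)

lemma J_ratio_gt: "w \<in> J n \<Longrightarrow> r ^ Suc n < wr w"
proof (cases "n = 0")
  case True
  assume "w \<in> J n"
  then show ?thesis using True rmin_less_1 by (simp add: Jn_def)
next
  case False
  assume w: "w \<in> J n"
  then have "w \<noteq> []" and letters: "set w \<subseteq> {..<N}" and gt: "r ^ n < wr (butlast w)"
    using False by (auto simp: Jn_def)
  then have "wr w = wr (butlast w) * rr (last w)"
    by (metis append_butlast_last_id word_ratio_append word_ratio_Cons word_ratio_Nil mult_1_right)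
  moreover have "r \<le> rr (last w)" using letters \<open>w \<noteq> []\<close> rmin_le by (auto simp: subset_eq)
  moreover have "0 < wr (butlast w)" using letters by (intro word_ratio_pos) (meson in_set_butlastD subset_eq)
  ultimately have "wr (butlast w) * r \<le> wr w" by (simp add: mult_left_mono)
  moreover have "r ^ n * r < wr (butlast w) * r" using gt rmin_pos by simp
  ultimately show ?thesis by (simp add: mult.commute)
qed

lemma J_disjoint: "w \<in> J n \<Longrightarrow> w \<in> J k \<Longrightarrow> n = k"
proof -
  have "k \<le> n" if "w \<in> J n" "w \<in> J k" for n k
  proof -
    have "r ^ Suc n < r ^ k" using J_ratio_gt[OF that(1)] J_ratio_le[OF that(2)] by simp
    then show ?thesis using power_strict_decreasing_iff[OF rmin_pos rmin_less_1, of "Suc n" k] by simp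
  qed
  then show "w \<in> J n \<Longrightarrow> w \<in> J k \<Longrightarrow> n = k" by (meson antisym)
qed

lemma level_eq: "w \<in> J n \<Longrightarrow> level N rr w = n"
  unfolding level_def by (rule Least_equality) (auto dest: J_disjoint)

text \<open>A word of \<open>J n\<close> has ratio above \<open>r ^ Suc n\<close> but at most \<open>rmax ^ length w\<close>, which bounds its length.\<close>
lemma finite_J: "finite (J n)"
proof -
  define rmax where "rmax = Max (rr ` {..<N})"
  have "rr ` {..<N} \<noteq> {}" using N_ge_2 by (auto simp: lessThan_empty_iff)
  then have "rmax \<in> rr ` {..<N}" unfolding rmax_def by (intro Max_in) auto
  then have rmax: "0 < rmax" "rmax < 1" using ratios by auto
  have "wr w \<le> rmax ^ length w" if "set w \<subseteq> {..<N}" for w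
    using that
  proof (induction w)
    case (Cons i w)
    then have "rr i \<le> rmax" "0 \<le> rr i" unfolding rmax_def using ratios by auto
    then show ?case using Cons word_ratio_pos[of w] by (simp add: mult_mono)
  qed simp
  moreover obtain L where L: "rmax ^ L < r ^ Suc n"
    using real_arch_pow_inv[of "r ^ Suc n" rmax] rmin_pos rmax by auto
  ultimately have "length w \<le> L" if "w \<in> J n" for w
    using J_ratio_gt[OF that] J_letters[OF that] power_decreasing[of L "length w" rmax] rmax
    by (meson linorder_not_le less_imp_le order.strict_trans1 order.strict_trans2)
  then have "J n \<subseteq> {w. set w \<subseteq> {..<N} \<and> length w \<le> L}" using J_letters by auto
  then show ?thesis using finite_lists_length_le[of "{..<N}" L] finite_subset by auto
qed

lemma finite_X: "finite (X n)"
  unfolding Xn_def using finite_J by auto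

lemma J_subset_X: "k \<le> n \<Longrightarrow> J k \<subseteq> X n"
  unfolding Xn_def by auto

lemma X_mono: "m \<le> n \<Longrightarrow> X m \<subseteq> X n"
  unfolding Xn_def by force

lemma J_Suc_notin_X: "w \<in> J (Suc m) \<Longrightarrow> w \<notin> X m"
  unfolding Xn_def using J_disjoint by fastforce

lemma cond_nonneg: "0 \<le> cond N rr S K \<alpha> \<gamma> lam x y"
  unfolding cond_def using lam_pos by (auto intro!: divide_nonneg_pos)

lemma network_X: "network (X n) sym_cond"
  by unfold_locales (auto simp: finite_X sym_cond_def cond_nonneg add_nonneg_nonneg)

lemma energy_eq_net_energy: "energy N rr S K \<alpha> \<gamma> lam n f = net_energy (X n) sym_cond f"
proof -
  let ?c = "cond N rr S K \<alpha> \<gamma> lam"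
  have "(\<Sum>x\<in>X n. \<Sum>y\<in>X n. ?c y x * (f x - f y)^2) = (\<Sum>x\<in>X n. \<Sum>y\<in>X n. ?c x y * (f x - f y)^2)"
    by (subst sum.swap) (simp add: power2_commute)
  then show ?thesis
    unfolding energy_def net_energy_def sym_cond_def
    by (simp add: sum.distrib sum_divide_distrib[symmetric] add_divide_distrib[symmetric] algebra_simps)
qed

lemma sym_cond_vertical_ge:
  assumes x: "x \<in> J k" and u: "u \<in> J (Suc k)" and "prefix x u"
  shows "q / (2 * \<rho> ^ Suc k) \<le> sym_cond u x"
proof -
  have "vert_edge N rr u x"
    unfolding vert_edge_def in_tree_def level_eq[OF u] using assms by auto
  then have cond_ux: "cond N rr S K \<alpha> \<gamma> lam u x = wr u powr \<alpha> / lam ^ Suc k"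
    unfolding cond_def level_eq[OF u] by simp
  have "(r ^ Suc (Suc k)) powr \<alpha> \<le> wr u powr \<alpha>"
    using J_ratio_gt[OF u] alpha_pos rmin_pos by (intro powr_mono2) auto
  moreover have "(r ^ Suc (Suc k)) powr \<alpha> = q ^ Suc (Suc k)"
    using rmin_pos by (induction k) (simp_all add: powr_mult)
  ultimately have "q ^ Suc (Suc k) / lam ^ Suc k \<le> cond N rr S K \<alpha> \<gamma> lam u x"
    unfolding cond_ux using lam_pos by (simp add: divide_right_mono)
  moreover have "q ^ Suc (Suc k) / lam ^ Suc k = q / \<rho> ^ Suc k"
    using lam_pos q_pos by (simp add: power_divide field_simps)
  ultimately show ?thesis using cond_nonneg[of x u] unfolding sym_cond_def by (simp add: field_simps)
qed

lemma sym_cond_horizontal: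
  assumes x: "x \<in> J m" and y: "y \<in> J m" and "x \<noteq> y"
    and "\<xi> \<in> word_map S x ` K" "\<xi> \<in> word_map S y ` K"
  shows "sym_cond x y = 1 / \<rho> ^ m"
proof -
  have not_vert: "\<not> vert_edge N rr a b" if "a \<in> J m" "b \<in> J m" for a b
    using that J_disjoint[of b m "m - 1"] unfolding vert_edge_def level_eq[OF that(1)] by auto
  have cond_eq: "cond N rr S K \<alpha> \<gamma> lam a b = 1 / \<rho> ^ m"
    if a: "a \<in> J m" and b: "b \<in> J m" "a \<noteq> b" and \<xi>: "\<xi> \<in> word_map S a ` K" "\<xi> \<in> word_map S b ` K" for a b
  proof -
    let ?D = "{dist (word_map S a s) (word_map S b t) | s t. s \<in> K \<and> t \<in> K}"
    have "0 \<in> ?D" using \<xi> by force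
    then have "Inf ?D \<le> \<gamma> * r ^ m"
      using gamma_pos rmin_pos by (intro cInf_lower2[of 0]) (auto intro: bdd_belowI[of _ 0])
    then have "horiz_edge N rr S K \<gamma> a b"
      unfolding horiz_edge_def in_tree_def level_eq[OF a] using a b by blast
    then show ?thesis
      unfolding cond_def level_eq[OF a] using not_vert[OF a b(1)] not_vert[OF b(1) a] lam_pos q_pos
      by (simp add: power_divide powr_power mult.commute)
  qed
  show ?thesis
    unfolding sym_cond_def using cond_eq[OF x y assms(3-5)] cond_eq[OF y x _ assms(5,4)] assms(3) by simp
qed

lemma kappa_seq_J: "kappa_seq N rr S K \<kappa> \<Longrightarrow> \<xi> \<in> K \<Longrightarrow> \<kappa> n \<xi> \<in> J n"
  unfolding kappa_seq_def by blast

lemma kappa_seq_prefix: "kappa_seq N rr S K \<kappa> \<Longrightarrow> \<xi> \<in> K \<Longrightarrow> prefix (\<kappa> n \<xi>) (\<kappa> (Suc n) \<xi>)"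
  unfolding kappa_seq_def by blast

lemma kappa_seq_cell: "kappa_seq N rr S K \<kappa> \<Longrightarrow> \<xi> \<in> K \<Longrightarrow> \<xi> \<in> word_map S (\<kappa> n \<xi>) ` K"
  unfolding kappa_seq_def by blast

lemma kappa_image_subset_X: "kappa_seq N rr S K \<kappa> \<Longrightarrow> \<Phi> \<subseteq> K \<Longrightarrow> \<kappa> m ` \<Phi> \<subseteq> X m"
  using kappa_seq_J J_subset_X[of m m] by blast

lemma level_res_eq_0:
  "\<kappa> m ` \<Phi> \<inter> \<kappa> m ` \<Psi> \<noteq> {} \<Longrightarrow> level_res N rr S K \<alpha> \<gamma> lam \<kappa> m \<Phi> \<Psi> = 0"
  unfolding level_res_def eff_res_def by simp

lemma level_res_eq_inverse_capacity:
  "\<kappa> m ` \<Phi> \<inter> \<kappa> m ` \<Psi> = {} \<Longrightarrow>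
    level_res N rr S K \<alpha> \<gamma> lam \<kappa> m \<Phi> \<Psi> = inverse (net_capacity (X m) sym_cond (\<kappa> m ` \<Phi>) (\<kappa> m ` \<Psi>))"
  unfolding level_res_def eff_res_def energy_eq_net_energy net_capacity_def admissible_def by simp

text \<open>Each ray is joined to the root by vertical edges of positive conductance, so a potential of
  zero energy takes the same value at all ray vertices.\<close>
lemma capacity_pos:
  assumes \<kappa>: "kappa_seq N rr S K \<kappa>" and "\<Phi> \<subseteq> K" "\<Psi> \<subseteq> K" "\<Phi> \<noteq> {}" "\<Psi> \<noteq> {}"
    and disj: "\<kappa> m ` \<Phi> \<inter> \<kappa> m ` \<Psi> = {}"
  shows "0 < net_capacity (X m) sym_cond (\<kappa> m ` \<Phi>) (\<kappa> m ` \<Psi>)"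
proof (rule ccontr)
  interpret network "X m" sym_cond by (rule network_X)
  obtain f where f: "equilibrium_potential (\<kappa> m ` \<Phi>) (\<kappa> m ` \<Psi>) f"
    using equilibrium_potential_exists[OF disj] .
  assume "\<not> 0 < net_capacity (X m) sym_cond (\<kappa> m ` \<Phi>) (\<kappa> m ` \<Psi>)"
  then have zero: "net_energy (X m) sym_cond f = 0"
    using capacity_eq_energy[OF f] energy_nonneg[of f] by simp
  have ray: "f (\<kappa> j \<xi>) = f []" if "\<xi> \<in> K" "j \<le> m" for \<xi> j
    using that(2)
  proof (induction j)
    case 0
    then show ?case using kappa_seq_J[OF \<kappa> \<open>\<xi> \<in> K\<close>, of 0] J_0 by simp
  next
    case (Suc j)
    let ?x = "\<kappa> j \<xi>" and ?u = "\<kappa> (Suc j) \<xi>"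
    have x: "?x \<in> J j" and u: "?u \<in> J (Suc j)" and "prefix ?x ?u"
      using kappa_seq_J[OF \<kappa> \<open>\<xi> \<in> K\<close>] kappa_seq_prefix[OF \<kappa> \<open>\<xi> \<in> K\<close>] by auto
    have "?x \<in> X m" "?u \<in> X m" using x u J_subset_X[of j m] J_subset_X[of "Suc j" m] Suc.prems by auto
    then have "sym_cond ?u ?x * (f ?u - f ?x)^2 \<le> 0"
      using energy_term_le[of ?u ?x f] zero by simp
    moreover have "0 < q / (2 * \<rho> ^ Suc j)"
      by (intro divide_pos_pos mult_pos_pos zero_less_power rho_pos q_pos) simp
    then have "0 < sym_cond ?u ?x" using sym_cond_vertical_ge[OF x u \<open>prefix ?x ?u\<close>] by linarith
    ultimately have "f ?u = f ?x" by (simp add: mult_le_0_iff)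
    then show ?case using Suc by simp
  qed
  obtain a b where "a \<in> \<Phi>" "b \<in> \<Psi>" using assms(4,5) by auto
  then have "f (\<kappa> m a) = 1" "f (\<kappa> m b) = 0"
    using f unfolding equilibrium_potential_def admissible_def by auto
  moreover have "f (\<kappa> m a) = f (\<kappa> m b)"
    using ray[of a m] ray[of b m] \<open>a \<in> \<Phi>\<close> \<open>b \<in> \<Psi>\<close> assms(2,3) by (metis order_refl subsetD)
  ultimately show False by simp
qed

lemma vertical_increment_le:
  assumes \<kappa>: "kappa_seq N rr S K \<kappa>" and "\<xi> \<in> K"
  shows "(g (\<kappa> m \<xi>) - g (\<kappa> (Suc m) \<xi>))^2 \<le>
           2 * \<rho> ^ Suc m / q * (net_energy (X (Suc m)) sym_cond g - net_energy (X m) sym_cond g)"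
proof -
  interpret network "X (Suc m)" sym_cond by (rule network_X)
  let ?x = "\<kappa> m \<xi>" and ?u = "\<kappa> (Suc m) \<xi>" and ?e = "2 * \<rho> ^ Suc m / q"
  have x: "?x \<in> J m" and u: "?u \<in> J (Suc m)" and "prefix ?x ?u"
    using kappa_seq_J[OF assms] kappa_seq_prefix[OF assms] by auto
  have "?e * (q / (2 * \<rho> ^ Suc m)) = 1"
    using q_pos lam_pos by (simp del: power_Suc)
  then have "1 \<le> ?e * sym_cond ?u ?x"
    using mult_left_mono[OF sym_cond_vertical_ge[OF x u \<open>prefix ?x ?u\<close>], of ?e] q_pos rho_pos
    by (simp del: power_Suc)
  then have "(g ?x - g ?u)^2 \<le> (?e * sym_cond ?u ?x) * (g ?x - g ?u)^2"
    using mult_right_mono[OF _ zero_le_power2[of "g ?x - g ?u"]] by (metis mult_1)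
  also have "\<dots> = ?e * (sym_cond ?x ?u * (g ?x - g ?u)^2)"
    by (simp add: c_sym)
  also have "\<dots> \<le> ?e * (net_energy (X (Suc m)) sym_cond g - net_energy (X m) sym_cond g)"
  proof (rule mult_left_mono)
    show "sym_cond ?x ?u * (g ?x - g ?u)^2 \<le> net_energy (X (Suc m)) sym_cond g - net_energy (X m) sym_cond g"
    proof -
      have "X m \<subseteq> X (Suc m)" "?x \<in> X m" "?u \<in> X (Suc m)"
        using X_mono x u J_subset_X[of m m] J_subset_X[of "Suc m" "Suc m"] by auto
      then show ?thesis using energy_add_edge_le[of "X m" ?x ?u g] J_Suc_notin_X[OF u] by simp
    qed
    show "0 \<le> ?e" using q_pos rho_pos by (simp del: power_Suc)
  qed
  finally show ?thesis .
qed

lemma horizontal_increment_le: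
  assumes \<kappa>: "kappa_seq N rr S K \<kappa>" and \<kappa>': "kappa_seq N rr S K \<kappa>'" and "\<xi> \<in> K"
  shows "(g (\<kappa> m \<xi>) - g (\<kappa>' m \<xi>))^2 \<le> 2 * \<rho> ^ m * net_energy (X m) sym_cond g"
proof (cases "\<kappa> m \<xi> = \<kappa>' m \<xi>")
  case False
  interpret network "X m" sym_cond by (rule network_X)
  let ?x = "\<kappa> m \<xi>" and ?y = "\<kappa>' m \<xi>"
  have x: "?x \<in> J m" and y: "?y \<in> J m" using kappa_seq_J \<kappa> \<kappa>' \<open>\<xi> \<in> K\<close> by auto
  have "\<rho> ^ m * sym_cond ?x ?y = 1"
    using sym_cond_horizontal[OF x y False kappa_seq_cell[OF \<kappa> \<open>\<xi> \<in> K\<close>] kappa_seq_cell[OF \<kappa>' \<open>\<xi> \<in> K\<close>]]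
      lam_pos rmin_pos by simp
  then have "(g ?x - g ?y)^2 = \<rho> ^ m * (sym_cond ?x ?y * (g ?x - g ?y)^2)"
    by (simp add: mult.assoc[symmetric])
  also have "\<dots> \<le> \<rho> ^ m * (2 * net_energy (X m) sym_cond g)"
    using x y J_subset_X[of m m] rho_pos by (intro mult_left_mono energy_term_le) auto
  finally show ?thesis by simp
qed (use rho_pos network.energy_nonneg[OF network_X] in simp)

lemma capacity_Suc_ge:
  assumes \<kappa>: "kappa_seq N rr S K \<kappa>" and "\<Phi> \<subseteq> K" "\<Psi> \<subseteq> K" "\<Phi> \<noteq> {}"
    and disj: "\<kappa> m ` \<Phi> \<inter> \<kappa> m ` \<Psi> = {}" and disj': "\<kappa> (Suc m) ` \<Phi> \<inter> \<kappa> (Suc m) ` \<Psi> = {}"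
  defines "C \<equiv> net_capacity (X m) sym_cond (\<kappa> m ` \<Phi>) (\<kappa> m ` \<Psi>)" and "e \<equiv> 2 * \<rho> ^ Suc m / q"
  shows "C / (1 + 4 * e * C) \<le> net_capacity (X (Suc m)) sym_cond (\<kappa> (Suc m) ` \<Phi>) (\<kappa> (Suc m) ` \<Psi>)"
proof -
  interpret X_m: network "X m" sym_cond by (rule network_X)
  interpret X_Suc: network "X (Suc m)" sym_cond by (rule network_X)
  have "0 \<le> C" unfolding C_def by (rule X_m.capacity_nonneg[OF disj])
  have "0 < e" unfolding e_def by (intro divide_pos_pos mult_pos_pos zero_less_power rho_pos q_pos) simp
  show ?thesis
  proof (rule X_Suc.capacity_ge[OF disj'])
    fix g assume g: "admissible (\<kappa> (Suc m) ` \<Phi>) (\<kappa> (Suc m) ` \<Psi>) g"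
    define P where "P = net_energy (X m) sym_cond g"
    define W where "W = net_energy (X (Suc m)) sym_cond g - P"
    have close: "(g (\<kappa> m \<xi>) - g (\<kappa> (Suc m) \<xi>))^2 \<le> e * W" if "\<xi> \<in> K" for \<xi>
      unfolding e_def W_def P_def using vertical_increment_le[OF \<kappa> that] .
    obtain \<xi> where "\<xi> \<in> \<Phi>" using \<open>\<Phi> \<noteq> {}\<close> by auto
    then have "0 \<le> e * W" using close[of \<xi>] \<open>\<Phi> \<subseteq> K\<close> by (meson order_trans subsetD zero_le_power2)
    then have "0 \<le> W" using \<open>0 < e\<close> by (simp add: zero_le_mult_iff)
    have "\<xi> \<in> \<Phi> \<union> \<Psi> \<Longrightarrow> (g (\<kappa> m \<xi>) - g (\<kappa> (Suc m) \<xi>))^2 \<le> e * W" for \<xi>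
      using close assms(2,3) by auto
    note approx = admissible_image_approx[OF g this]
    have "sqrt C \<le> sqrt P + 2 * sqrt (e * W) * sqrt C"
      unfolding C_def P_def
      using kappa_image_subset_X[OF \<kappa>] assms(2,3) disj approx \<open>0 \<le> e * W\<close>
      by (intro X_m.sqrt_capacity_le_approx_admissible) auto
    then have "C \<le> (1 + 4 * e * C) * (P + W)"
      using \<open>0 \<le> C\<close> \<open>0 < e\<close> \<open>0 \<le> W\<close> X_m.energy_nonneg unfolding P_def
      by (intro le_mult_add_of_sqrt_le) auto
    moreover have "0 < 1 + 4 * e * C" using \<open>0 \<le> C\<close> \<open>0 < e\<close> by (simp add: add_pos_nonneg)
    ultimately show "C / (1 + 4 * e * C) \<le> net_energy (X (Suc m)) sym_cond g"
      unfolding W_def by (simp add: divide_le_eq mult.commute)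
  qed
qed

lemma capacity_other_kappa_ge:
  assumes \<kappa>: "kappa_seq N rr S K \<kappa>" and \<kappa>': "kappa_seq N rr S K \<kappa>'" and "\<Phi> \<subseteq> K" "\<Psi> \<subseteq> K"
    and disj: "\<kappa> m ` \<Phi> \<inter> \<kappa> m ` \<Psi> = {}" and disj': "\<kappa>' m ` \<Phi> \<inter> \<kappa>' m ` \<Psi> = {}"
  defines "C \<equiv> net_capacity (X m) sym_cond (\<kappa> m ` \<Phi>) (\<kappa> m ` \<Psi>)" and "k \<equiv> sqrt (2 * \<rho> ^ m)"
  shows "sqrt C / (1 + 2 * k * sqrt C) \<le> sqrt (net_capacity (X m) sym_cond (\<kappa>' m ` \<Phi>) (\<kappa>' m ` \<Psi>))"
proof -
  interpret X_m: network "X m" sym_cond by (rule network_X)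
  have "0 \<le> C" unfolding C_def by (rule X_m.capacity_nonneg[OF disj])
  have "0 \<le> k" unfolding k_def using rho_pos by simp
  have "(sqrt C / (1 + 2 * k * sqrt C))^2 \<le> net_capacity (X m) sym_cond (\<kappa>' m ` \<Phi>) (\<kappa>' m ` \<Psi>)"
  proof (rule X_m.capacity_ge[OF disj'])
    fix g assume g: "admissible (\<kappa>' m ` \<Phi>) (\<kappa>' m ` \<Psi>) g"
    define P where "P = net_energy (X m) sym_cond g"
    have "0 \<le> P" unfolding P_def by (rule X_m.energy_nonneg)
    have "(g (\<kappa> m \<xi>) - g (\<kappa>' m \<xi>))^2 \<le> (k * sqrt P)^2" if "\<xi> \<in> \<Phi> \<union> \<Psi>" for \<xi>
    proof -
      have "\<xi> \<in> K" using that assms(3,4) by auto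
      then show ?thesis
        using horizontal_increment_le[OF \<kappa> \<kappa>', where g = g and m = m] \<open>0 \<le> P\<close> rho_pos
        unfolding k_def P_def by (simp add: power_mult_distrib)
    qed
    note approx = admissible_image_approx[OF g this]
    have "sqrt C \<le> sqrt P + 2 * (k * sqrt P) * sqrt C"
      unfolding C_def P_def
      using kappa_image_subset_X[OF \<kappa>] assms(3,4) disj \<open>0 \<le> P\<close> \<open>0 \<le> k\<close> approx
      by (intro X_m.sqrt_capacity_le_approx_admissible) (auto simp: P_def)
    then have "sqrt C / (1 + 2 * k * sqrt C) \<le> sqrt P"
      by (rule div_le_sqrt_of_sqrt_le[OF \<open>0 \<le> C\<close> \<open>0 \<le> k\<close> \<open>0 \<le> P\<close>])
    then show "(sqrt C / (1 + 2 * k * sqrt C))^2 \<le> net_energy (X m) sym_cond g"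
      using \<open>0 \<le> C\<close> \<open>0 \<le> k\<close> \<open>0 \<le> P\<close> unfolding P_def by (simp add: real_le_rsqrt sqrt_ge_absD)
  qed
  then show ?thesis using real_le_rsqrt by blast
qed

lemma level_res_Suc_le:
  assumes \<kappa>: "kappa_seq N rr S K \<kappa>" and "\<Phi> \<subseteq> K" "\<Psi> \<subseteq> K" "\<Phi> \<noteq> {}" "\<Psi> \<noteq> {}"
    and disj: "\<kappa> m ` \<Phi> \<inter> \<kappa> m ` \<Psi> = {}" and disj': "\<kappa> (Suc m) ` \<Phi> \<inter> \<kappa> (Suc m) ` \<Psi> = {}"
  shows "level_res N rr S K \<alpha> \<gamma> lam \<kappa> (Suc m) \<Phi> \<Psi> \<le>
           level_res N rr S K \<alpha> \<gamma> lam \<kappa> m \<Phi> \<Psi> + 8 * \<rho> ^ Suc m / q"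
proof -
  define C where "C = net_capacity (X m) sym_cond (\<kappa> m ` \<Phi>) (\<kappa> m ` \<Psi>)"
  define e where "e = 2 * \<rho> ^ Suc m / q"
  have "0 < C" unfolding C_def by (rule capacity_pos[OF assms(1-6)])
  have "0 < e" unfolding e_def by (intro divide_pos_pos mult_pos_pos zero_less_power rho_pos q_pos) simp
  have "C / (1 + 4 * e * C) \<le> net_capacity (X (Suc m)) sym_cond (\<kappa> (Suc m) ` \<Phi>) (\<kappa> (Suc m) ` \<Psi>)"
    unfolding C_def e_def by (rule capacity_Suc_ge[OF assms(1-4) disj disj'])
  moreover have "0 < C / (1 + 4 * e * C)" using \<open>0 < C\<close> \<open>0 < e\<close> by (simp add: add_pos_pos)
  ultimately have "level_res N rr S K \<alpha> \<gamma> lam \<kappa> (Suc m) \<Phi> \<Psi> \<le> inverse (C / (1 + 4 * e * C))"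
    unfolding level_res_eq_inverse_capacity[of \<kappa> "Suc m", OF disj'] by (rule le_imp_inverse_le)
  also have "\<dots> = inverse C + 4 * e" using \<open>0 < C\<close> \<open>0 < e\<close> by (simp add: field_simps)
  finally show ?thesis
    unfolding C_def e_def level_res_eq_inverse_capacity[of \<kappa> m, OF disj] by simp
qed

lemma sqrt_level_res_le:
  assumes \<kappa>: "kappa_seq N rr S K \<kappa>" and \<kappa>': "kappa_seq N rr S K \<kappa>'"
    and "\<Phi> \<subseteq> K" "\<Psi> \<subseteq> K" "\<Phi> \<noteq> {}" "\<Psi> \<noteq> {}"
    and disj: "\<kappa> m ` \<Phi> \<inter> \<kappa> m ` \<Psi> = {}" and disj': "\<kappa>' m ` \<Phi> \<inter> \<kappa>' m ` \<Psi> = {}"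
  shows "sqrt (level_res N rr S K \<alpha> \<gamma> lam \<kappa>' m \<Phi> \<Psi>) \<le>
           sqrt (level_res N rr S K \<alpha> \<gamma> lam \<kappa> m \<Phi> \<Psi>) + 2 * sqrt (2 * \<rho> ^ m)"
proof -
  define C where "C = net_capacity (X m) sym_cond (\<kappa> m ` \<Phi>) (\<kappa> m ` \<Psi>)"
  define k where "k = sqrt (2 * \<rho> ^ m)"
  define b where "b = sqrt C / (1 + 2 * k * sqrt C)"
  have "0 < C" unfolding C_def by (rule capacity_pos[OF \<kappa> assms(3-6) disj])
  have "0 \<le> k" unfolding k_def using rho_pos by simp
  then have "0 < 1 + 2 * k * sqrt C" using \<open>0 < C\<close> by (simp add: add_pos_nonneg)
  then have "0 < b" unfolding b_def using \<open>0 < C\<close> by simp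
  have "b \<le> sqrt (net_capacity (X m) sym_cond (\<kappa>' m ` \<Phi>) (\<kappa>' m ` \<Psi>))"
    unfolding b_def C_def k_def by (rule capacity_other_kappa_ge[OF \<kappa> \<kappa>' assms(3,4) disj disj'])
  then have "sqrt (level_res N rr S K \<alpha> \<gamma> lam \<kappa>' m \<Phi> \<Psi>) \<le> inverse b"
    unfolding level_res_eq_inverse_capacity[of \<kappa>' m, OF disj'] real_sqrt_inverse
    using \<open>0 < b\<close> by (rule le_imp_inverse_le)
  also have "inverse b = inverse (sqrt C) + 2 * k"
    unfolding b_def using \<open>0 < C\<close> \<open>0 < 1 + 2 * k * sqrt C\<close> by (simp add: field_simps)
  finally show ?thesis
    unfolding C_def k_def level_res_eq_inverse_capacity[of \<kappa> m, OF disj] real_sqrt_inverse .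
qed

lemma dist_le_if_same_cell:
  assumes \<kappa>: "kappa_seq N rr S K \<kappa>" and "bounded K" and "a \<in> K" "b \<in> K" and "\<kappa> m a = \<kappa> m b"
  shows "dist a b \<le> r ^ m * diameter K"
proof -
  let ?x = "\<kappa> m a"
  have x: "?x \<in> J m" using kappa_seq_J[OF \<kappa> \<open>a \<in> K\<close>] .
  obtain a' where a': "a' \<in> K" "word_map S ?x a' = a"
    using kappa_seq_cell[OF \<kappa> \<open>a \<in> K\<close>, of m] by (metis imageE)
  obtain b' where b': "b' \<in> K" "word_map S ?x b' = b"
    using kappa_seq_cell[OF \<kappa> \<open>b \<in> K\<close>, of m] unfolding \<open>\<kappa> m a = \<kappa> m b\<close> by (metis imageE)
  have "dist a b = wr ?x * dist a' b'" using dist_word_map[OF J_letters[OF x], of a' b'] a'(2) b'(2) by simp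
  also have "\<dots> \<le> r ^ m * diameter K"
    using J_ratio_le[OF x] diameter_bounded_bound[OF \<open>bounded K\<close> \<open>a' \<in> K\<close> \<open>b' \<in> K\<close>]
      word_ratio_pos[OF J_letters[OF x]] diameter_ge_0[OF \<open>bounded K\<close>]
    by (intro mult_mono) auto
  finally show ?thesis .
qed

lemma eventually_kappa_images_disjoint:
  assumes "compact K" and "closed \<Phi>" "closed \<Psi>" "\<Phi> \<subseteq> K" "\<Psi> \<subseteq> K" and "\<Phi> \<inter> \<Psi> = {}"
  obtains m0 where "\<And>m \<kappa>. m \<ge> m0 \<Longrightarrow> kappa_seq N rr S K \<kappa> \<Longrightarrow> \<kappa> m ` \<Phi> \<inter> \<kappa> m ` \<Psi> = {}"
proof -
  have "compact \<Phi>" using compact_Int_closed[OF \<open>compact K\<close> \<open>closed \<Phi>\<close>] \<open>\<Phi> \<subseteq> K\<close> by (simp add: Int_absorb1)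
  then obtain \<delta> where "0 < \<delta>" and sep: "\<And>a b. a \<in> \<Phi> \<Longrightarrow> b \<in> \<Psi> \<Longrightarrow> \<delta> \<le> dist a b"
    using separate_compact_closed[OF _ \<open>closed \<Psi>\<close> \<open>\<Phi> \<inter> \<Psi> = {}\<close>] by blast
  have "bounded K" using \<open>compact K\<close> by (rule compact_imp_bounded)
  define D where "D = diameter K"
  have "0 \<le> D" unfolding D_def using \<open>bounded K\<close> by (rule diameter_ge_0)
  obtain m0 where m0: "r ^ m0 < \<delta> / (D + 1)"
    using real_arch_pow_inv[of "\<delta> / (D + 1)" r] \<open>0 < \<delta>\<close> \<open>0 \<le> D\<close> rmin_pos rmin_less_1 by auto
  have "\<kappa> m ` \<Phi> \<inter> \<kappa> m ` \<Psi> = {}" if "m \<ge> m0" and \<kappa>: "kappa_seq N rr S K \<kappa>" for m \<kappa>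
  proof (rule ccontr)
    assume "\<kappa> m ` \<Phi> \<inter> \<kappa> m ` \<Psi> \<noteq> {}"
    then obtain a b where "a \<in> \<Phi>" "b \<in> \<Psi>" "\<kappa> m a = \<kappa> m b" by blast
    then have "dist a b \<le> r ^ m * D"
      unfolding D_def using assms(4,5) by (intro dist_le_if_same_cell[OF \<kappa> \<open>bounded K\<close>]) auto
    also have "\<dots> \<le> r ^ m0 * D"
      using rmin_pos rmin_less_1 \<open>m \<ge> m0\<close> \<open>0 \<le> D\<close> by (intro mult_right_mono power_decreasing) auto
    also have "\<dots> \<le> \<delta> / (D + 1) * D" using m0 \<open>0 \<le> D\<close> by (intro mult_right_mono) auto
    also have "\<dots> = \<delta> * (D / (D + 1))" by simp
    also have "\<dots> < \<delta> * 1" using \<open>0 < \<delta>\<close> \<open>0 \<le> D\<close> by (intro mult_strict_left_mono) auto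
    finally show False using sep[OF \<open>a \<in> \<Phi>\<close> \<open>b \<in> \<Psi>\<close>] by simp
  qed
  then show ?thesis using that by blast
qed

lemma level_res_convergent:
  assumes \<kappa>: "kappa_seq N rr S K \<kappa>" and "\<Phi> \<subseteq> K" "\<Psi> \<subseteq> K" "\<Phi> \<noteq> {}" "\<Psi> \<noteq> {}"
    and disj: "\<forall>m\<ge>M. \<kappa> m ` \<Phi> \<inter> \<kappa> m ` \<Psi> = {}"
  shows "convergent (\<lambda>n. level_res N rr S K \<alpha> \<gamma> lam \<kappa> n \<Phi> \<Psi>)"
proof (rule convergent_if_almost_decreasing)
  show "summable (\<lambda>m. 8 * \<rho> ^ Suc m / q)"
    using rho_pos rho_less_1 lam_pos by (intro summable_divide summable_mult summable_ignore_initial_segment[of _ 1]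
        summable_geometric) (simp_all add: abs_of_pos)
  show "0 \<le> 8 * \<rho> ^ Suc m / q" for m
    using rho_pos q_pos by (simp del: power_Suc)
  fix m assume "m \<ge> M"
  then show "level_res N rr S K \<alpha> \<gamma> lam \<kappa> (Suc m) \<Phi> \<Psi> \<le> level_res N rr S K \<alpha> \<gamma> lam \<kappa> m \<Phi> \<Psi> + 8 * \<rho> ^ Suc m / q"
    using disj by (intro level_res_Suc_le[OF assms(1-5)]) simp_all
  show "0 \<le> level_res N rr S K \<alpha> \<gamma> lam \<kappa> m \<Phi> \<Psi>"
    using capacity_pos[OF assms(1-5) disj[rule_format, OF \<open>m \<ge> M\<close>]]
    unfolding level_res_eq_inverse_capacity[of \<kappa> m, OF disj[rule_format, OF \<open>m \<ge> M\<close>]] by simp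
qed

lemma lim_level_res_le:
  assumes \<kappa>: "kappa_seq N rr S K \<kappa>" and \<kappa>': "kappa_seq N rr S K \<kappa>'"
    and "\<Phi> \<subseteq> K" "\<Psi> \<subseteq> K" "\<Phi> \<noteq> {}" "\<Psi> \<noteq> {}"
    and disj: "\<forall>m\<ge>M. \<kappa> m ` \<Phi> \<inter> \<kappa> m ` \<Psi> = {}"
    and disj': "\<forall>m\<ge>M. \<kappa>' m ` \<Phi> \<inter> \<kappa>' m ` \<Psi> = {}"
  shows "lim (\<lambda>n. level_res N rr S K \<alpha> \<gamma> lam \<kappa>' n \<Phi> \<Psi>) \<le> lim (\<lambda>n. level_res N rr S K \<alpha> \<gamma> lam \<kappa> n \<Phi> \<Psi>)"
proof -
  let ?R = "\<lambda>\<kappa> n. level_res N rr S K \<alpha> \<gamma> lam \<kappa> n \<Phi> \<Psi>"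
  have "convergent (?R \<kappa>)" "convergent (?R \<kappa>')"
    using level_res_convergent[OF \<kappa> assms(3-6) disj]
      level_res_convergent[OF \<kappa>' assms(3-6) disj'] by auto
  then have lim: "?R \<kappa> \<longlonglongrightarrow> lim (?R \<kappa>)" "?R \<kappa>' \<longlonglongrightarrow> lim (?R \<kappa>')"
    by (simp_all add: convergent_LIMSEQ_iff)
  have "(\<lambda>n. \<rho> ^ n) \<longlonglongrightarrow> 0"
    using rho_pos rho_less_1 by (intro LIMSEQ_power_zero) simp
  then have "(\<lambda>n. sqrt (?R \<kappa> n) + 2 * sqrt (2 * \<rho> ^ n)) \<longlonglongrightarrow> sqrt (lim (?R \<kappa>)) + 2 * sqrt (2 * 0)"
    by (intro tendsto_add tendsto_mult tendsto_const tendsto_real_sqrt lim(1))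
  moreover have "sqrt (?R \<kappa>' n) \<le> sqrt (?R \<kappa> n) + 2 * sqrt (2 * \<rho> ^ n)" if "n \<ge> M" for n
    using sqrt_level_res_le[OF \<kappa> \<kappa>' assms(3-6) disj[rule_format, OF that] disj'[rule_format, OF that]] .
  ultimately have "sqrt (lim (?R \<kappa>')) \<le> sqrt (lim (?R \<kappa>)) + 2 * sqrt (2 * 0)"
    using LIMSEQ_le[OF tendsto_real_sqrt[OF lim(2)]] by blast
  then show ?thesis by simp
qed

theorem level_res_limit_exists:
  assumes "compact K" and "closed \<Phi>" "\<Phi> \<subseteq> K" "\<Phi> \<noteq> {}" and "closed \<Psi>" "\<Psi> \<subseteq> K" "\<Psi> \<noteq> {}"
  shows "\<exists>L. \<forall>\<kappa>. kappa_seq N rr S K \<kappa> \<longrightarrow> (\<lambda>n. level_res N rr S K \<alpha> \<gamma> lam \<kappa> n \<Phi> \<Psi>) \<longlonglongrightarrow> L"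
proof (cases "\<Phi> \<inter> \<Psi> = {}")
  case True
  let ?R = "\<lambda>\<kappa> n. level_res N rr S K \<alpha> \<gamma> lam \<kappa> n \<Phi> \<Psi>"
  obtain m0 where disj: "\<And>m \<kappa>. m \<ge> m0 \<Longrightarrow> kappa_seq N rr S K \<kappa> \<Longrightarrow> \<kappa> m ` \<Phi> \<inter> \<kappa> m ` \<Psi> = {}"
    using eventually_kappa_images_disjoint[OF assms(1,2,5,3,6) True] by blast
  show ?thesis
  proof (cases "\<exists>\<kappa>. kappa_seq N rr S K \<kappa>")
    case True
    then obtain \<kappa>0 where \<kappa>0: "kappa_seq N rr S K \<kappa>0" ..
    have disj0: "\<forall>m\<ge>m0. \<kappa>0 m ` \<Phi> \<inter> \<kappa>0 m ` \<Psi> = {}" using disj \<kappa>0 by blast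
    have "?R \<kappa> \<longlonglongrightarrow> lim (?R \<kappa>0)" if \<kappa>: "kappa_seq N rr S K \<kappa>" for \<kappa>
    proof -
      have disj\<kappa>: "\<forall>m\<ge>m0. \<kappa> m ` \<Phi> \<inter> \<kappa> m ` \<Psi> = {}" using disj \<kappa> by blast
      have "lim (?R \<kappa>) = lim (?R \<kappa>0)"
        using lim_level_res_le[OF \<kappa>0 \<kappa> assms(3,6,4,7) disj0 disj\<kappa>]
          lim_level_res_le[OF \<kappa> \<kappa>0 assms(3,6,4,7) disj\<kappa> disj0]
        by (rule antisym)
      moreover have "convergent (?R \<kappa>)"
        using level_res_convergent[OF \<kappa> assms(3,6,4,7) disj\<kappa>] .
      ultimately show ?thesis by (simp add: convergent_LIMSEQ_iff)
    qed
    then show ?thesis by blast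
  qed simp
next
  case False
  then have "level_res N rr S K \<alpha> \<gamma> lam \<kappa> n \<Phi> \<Psi> = 0" for \<kappa> n
    by (intro level_res_eq_0) blast
  then show ?thesis by (auto intro: tendsto_const)
qed

end

theorem theorem4p1:
  fixes N :: nat and S :: "nat \<Rightarrow> 'a::euclidean_space \<Rightarrow> 'a" and rr :: "nat \<Rightarrow> real"
    and K :: "'a set" and \<alpha> \<gamma> lam :: real and \<Phi> \<Psi> :: "'a set"
  assumes "N \<ge> 2"
    and "\<forall>i<N. 0 < rr i \<and> rr i < 1 \<and> similitude (rr i) (S i)"
    and "open_set_condition N S"
    and "compact K" and "K \<noteq> {}" and "K = (\<Union>i<N. S i ` K)"
    and "(\<Sum>i<N. rr i powr \<alpha>) = 1"
    and "\<gamma> > 0"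
    and "0 < lam" and "lam < rmin N rr powr \<alpha>"
    and "closed \<Phi>" and "\<Phi> \<subseteq> K" and "\<Phi> \<noteq> {}"
    and "closed \<Psi>" and "\<Psi> \<subseteq> K" and "\<Psi> \<noteq> {}"
  shows "\<exists>L. \<forall>\<kappa>. kappa_seq N rr S K \<kappa> \<longrightarrow>
           (\<lambda>n. level_res N rr S K \<alpha> \<gamma> lam \<kappa> n \<Phi> \<Psi>) \<longlonglongrightarrow> L"
proof -
  interpret lambda_nrw N rr S K \<alpha> \<gamma> lam
    using assms by unfold_locales auto
  show ?thesis using assms by (intro level_res_limit_exists) auto
qed

end
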